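(* Let $A$ be a $\{0,1\}$-matrix and let $\mathcal{C}=\{\omega(1),\dots,\omega(M)\}\subset B_*(X_A)$ be a prefix code, $\Sigma_{A(\mathcal{C})}=\{1,\dots,M\}$. The following are equivalent: (1) for any $\gamma\in B_*(X_A)$ there exists $\eta\in B_*(X_A)$ with $\gamma\eta\in B_*(X_A)$ and there exists a unique finite sequence $(i_1,\dots,i_k)\in(\Sigma_{A(\mathcal{C})})^k$ with $\gamma\eta=\omega(i_1)\omega(i_2)\cdots\omega(i_k)$; (2) for any $x=(x_n)_{n\in\mathbb{N}}\in X_A$ there exist a unique increasing sequence $1<k_1<k_2<\cdots$ of positive integers and $i_1,i_2,\dots\in\Sigma_{A(\mathcal{C})}$ such that $x_{[1,k_1)}=\omega(i_1)$ and $x_{[k_n,k_{n+1})}=\omega(i_{n+1})$ for all $n\ge1$, i.e. $x$ has a unique factorization $x=\omega(i_1)\omega(i_2)\cdots$.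
   Context: For an $N\times N$ matrix $A$ with entries in $\{0,1\}$, $\Sigma_A=\{1,\dots,N\}$ and $X_A$ is the set of sequences $(x_n)_{n\in\mathbb{N}}$ in $\Sigma_A$ with $A(x_n,x_{n+1})=1$ for all $n$, with product topology. $B_k(X_A)$ is the set of admissible words of length $k$ (those occurring in elements of $X_A$), and $B_*(X_A)=\bigcup_{k\ge0}B_k(X_A)$ including the empty word. $x_{[a,b)}$ denotes the word $x_ax_{a+1}\cdots x_{b-1}$. A code is a nonempty $\mathcal{C}\subset B_*(X_A)$ such that any equality $\omega(i_1)\cdots\omega(i_k)=\omega(j_1)\cdots\omega(j_n)$ of concatenations of words of $\mathcal{C}$ forces $n=k$ and $\omega(i_m)=\omega(j_m)$ for all $m$; a prefix code is a code in which no word is a prefix of another. *)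

theory Defs
  imports Main "HOL-Library.Sublist"
begin

text \<open>Symbols are 1..N, sequences are indexed
  from 0 (position 0 corresponds to the paper's index 1).  The matrix is a function
  A :: nat => nat => nat whose entries on {1..N} x {1..N} lie in {0,1}.\<close>

definition XA :: "nat \<Rightarrow> (nat \<Rightarrow> nat \<Rightarrow> nat) \<Rightarrow> (nat \<Rightarrow> nat) set" where
  "XA N A = {x. (\<forall>n. x n \<in> {1..N}) \<and> (\<forall>n. A (x n) (x (Suc n)) = 1)}"

definition word :: "(nat \<Rightarrow> nat) \<Rightarrow> nat \<Rightarrow> nat \<Rightarrow> nat list" where
  "word x a b = map x [a..<b]"

definition Bstar :: "nat \<Rightarrow> (nat \<Rightarrow> nat \<Rightarrow> nat) \<Rightarrow> nat list set" where
  "Bstar N A = {[]} \<union> {w. \<exists>x\<in>XA N A. \<exists>a. w = word x a (a + length w)}"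

definition is_code :: "nat \<Rightarrow> (nat \<Rightarrow> nat \<Rightarrow> nat) \<Rightarrow> nat list set \<Rightarrow> bool" where
  "is_code N A C \<longleftrightarrow> C \<noteq> {} \<and> C \<subseteq> Bstar N A \<and>
     (\<forall>us vs. set us \<subseteq> C \<longrightarrow> set vs \<subseteq> C \<longrightarrow> concat us = concat vs \<longrightarrow> us = vs)"

definition is_prefix_code :: "nat \<Rightarrow> (nat \<Rightarrow> nat \<Rightarrow> nat) \<Rightarrow> nat list set \<Rightarrow> bool" where
  "is_prefix_code N A C \<longleftrightarrow> is_code N A C \<and>
     (\<forall>u\<in>C. \<forall>v\<in>C. prefix u v \<longrightarrow> u = v)"

end

theory Submission imports Defs begin

text \<open>
  Because the code is prefix-free, a finite sequence of code words whose concatenation is an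
  initial segment of \<open>x\<close> is determined by its number of words, so the ones with \<open>n\<close> and
  \<open>n + 1\<close> words are nested; hence \<open>x\<close> has a (necessarily unique) factorization as soon as
  it has such initial factorizations of every length \<open>n\<close>.  Condition (1) provides them: if
  every code word has length at most \<open>L\<close>, any factorization of an extension of
  \<open>word x 0 (n * L)\<close> has at least \<open>n\<close> words, and the first \<open>n\<close> of them fit inside
  \<open>word x 0 (n * L)\<close>.  Conversely, a nonempty admissible word \<open>\<gamma>\<close> is an initial segment of some
  \<open>x \<in> XA N A\<close>, and cutting the factorization of \<open>x\<close> after \<open>|\<gamma>|\<close> words gives the extension
  required in (1), whose factorization is unique because the code words form a code.
\<close>

lemma length_word [simp]: "length (word x a b) = b - a"
  by (simp add: word_def)

lemma word_append: "a \<le> b \<Longrightarrow> b \<le> c \<Longrightarrow> word x a c = word x a b @ word x b c"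
  unfolding word_def by (metis le_add_diff_inverse map_append upt_add_eq_append)

lemma word_shift: "word (\<lambda>n. x (a + n)) p q = word x (a + p) (a + q)"
  unfolding word_def by (rule nth_equalityI) (auto simp: add.assoc)

lemma prefix_word: "l \<le> m \<Longrightarrow> prefix (word x 0 l) (word x 0 m)"
  by (rule prefixI, rule word_append) simp_all

lemma word_prefix:
  assumes "word x 0 (length v) = v" "prefix u v"
  shows "word x 0 (length u) = u"
proof -
  obtain w where v: "v = u @ w"
    using assms(2) prefixE by blast
  have "word x 0 (length v) = word x 0 (length u) @ word x (length u) (length v)"
    using v by (intro word_append) auto
  then show ?thesis
    using assms(1) v by simp
qed

lemma XA_shift: "x \<in> XA N A \<Longrightarrow> (\<lambda>n. x (a + n)) \<in> XA N A"
  unfolding XA_def by auto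

lemma word_in_Bstar:
  assumes "x \<in> XA N A"
  shows "word x a b \<in> Bstar N A"
proof (cases "a \<le> b")
  case True
  then have "word x a b = word x a (a + length (word x a b))" by simp
  then show ?thesis
    using assms unfolding Bstar_def by blast
qed (simp add: Bstar_def word_def)

lemma Bstar_nonempty_word:
  assumes "\<gamma> \<in> Bstar N A" "\<gamma> \<noteq> []"
  obtains x where "x \<in> XA N A" "\<gamma> = word x 0 (length \<gamma>)"
proof -
  obtain x a where "x \<in> XA N A" "\<gamma> = word x a (a + length \<gamma>)"
    using assms unfolding Bstar_def by blast
  then show thesis
    using that[of "\<lambda>n. x (a + n)"] by (simp add: XA_shift word_shift)
qed

definition prefix_free_on :: "('a \<Rightarrow> 'b list) \<Rightarrow> 'a set \<Rightarrow> bool" where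
  "prefix_free_on \<omega> S \<longleftrightarrow> (\<forall>a\<in>S. \<forall>b\<in>S. prefix (\<omega> a) (\<omega> b) \<longrightarrow> a = b)"

lemma prefix_free_on_concat_unique:
  assumes "prefix_free_on \<omega> S"
    and "set is \<subseteq> S" "set js \<subseteq> S" "length is = length js"
    and "prefix (concat (map \<omega> is)) w" "prefix (concat (map \<omega> js)) w"
  shows "is = js"
  using assms(2-)
proof (induction "is" arbitrary: js w)
  case Nil
  then show ?case by simp
next
  case (Cons a "is")
  then obtain b js' where js: "js = b # js'"
    by (cases js) simp_all
  have "prefix (\<omega> a @ concat (map \<omega> is)) w" "prefix (\<omega> b @ concat (map \<omega> js')) w"
    using Cons.prems(4,5) js by simp_all
  then have "prefix (\<omega> a) w" "prefix (\<omega> b) w"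
    by (auto dest: append_prefixD)
  then have "prefix (\<omega> a) (\<omega> b) \<or> prefix (\<omega> b) (\<omega> a)"
    by (rule prefix_same_cases)
  then have "a = b"
    using assms(1) Cons.prems(1,2) js unfolding prefix_free_on_def by auto
  obtain w' where "w = \<omega> a @ w'"
    using \<open>prefix (\<omega> a) w\<close> prefixE by blast
  then have "is = js'"
    using Cons.prems js \<open>a = b\<close> by (intro Cons.IH[of js' w']) simp_all
  then show ?case
    using \<open>a = b\<close> js by simp
qed

lemma prefix_concat_map_take: "prefix (concat (map \<omega> (take n xs))) (concat (map \<omega> xs))"
  by (metis append_take_drop_id concat_append map_append prefixI)

lemma length_concat_map_le:
  "\<forall>a\<in>S. length (\<omega> a) \<le> L \<Longrightarrow> set xs \<subseteq> S \<Longrightarrow> length (concat (map \<omega> xs)) \<le> length xs * L"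
  by (induction xs) auto

definition prefix_factorization ::
  "(nat \<Rightarrow> nat list) \<Rightarrow> nat set \<Rightarrow> (nat \<Rightarrow> nat) \<Rightarrow> nat list \<Rightarrow> bool" where
  "prefix_factorization \<omega> S x is \<longleftrightarrow>
     set is \<subseteq> S \<and> word x 0 (length (concat (map \<omega> is))) = concat (map \<omega> is)"

definition factorization ::
  "(nat \<Rightarrow> nat list) \<Rightarrow> nat set \<Rightarrow> (nat \<Rightarrow> nat) \<Rightarrow> (nat \<Rightarrow> nat) \<Rightarrow> (nat \<Rightarrow> nat) \<Rightarrow> bool" where
  "factorization \<omega> S x k i \<longleftrightarrow>
     k 0 = 0 \<and> strict_mono k \<and> (\<forall>n. i n \<in> S \<and> word x (k n) (k (Suc n)) = \<omega> (i n))"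

lemma prefix_factorization_unique:
  assumes "prefix_free_on \<omega> S"
    and "prefix_factorization \<omega> S x is" "prefix_factorization \<omega> S x js"
    and "length is = length js"
  shows "is = js"
proof -
  let ?u = "concat (map \<omega> is)" and ?v = "concat (map \<omega> js)"
  let ?w = "word x 0 (max (length ?u) (length ?v))"
  have "prefix (word x 0 (length ?u)) ?w" "prefix (word x 0 (length ?v)) ?w"
    by (simp_all add: prefix_word)
  then have "prefix ?u ?w" "prefix ?v ?w"
    using assms(2,3) unfolding prefix_factorization_def by simp_all
  then show ?thesis
    using prefix_free_on_concat_unique[OF assms(1)] assms(2-4)
    unfolding prefix_factorization_def by blast
qed

lemma factorization_word_0:
  assumes "factorization \<omega> S x k i"
  shows "word x 0 (k n) = concat (map \<omega> (map i [0..<n]))"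
proof (induction n)
  case 0
  then show ?case
    using assms by (simp add: factorization_def word_def)
next
  case (Suc n)
  have "k n \<le> k (Suc n)"
    using assms by (simp add: factorization_def strict_mono_Suc_iff less_imp_le)
  then have "word x 0 (k (Suc n)) = word x 0 (k n) @ word x (k n) (k (Suc n))"
    by (intro word_append) auto
  then show ?case
    using Suc assms by (simp add: factorization_def)
qed

lemma prefix_factorization_of_factorization:
  assumes fac: "factorization \<omega> S x k i"
  shows "prefix_factorization \<omega> S x (map i [0..<n])"
proof -
  have eq: "word x 0 (k n) = concat (map \<omega> (map i [0..<n]))"
    using fac by (rule factorization_word_0)
  moreover have "length (word x 0 (k n)) = k n" by simp
  ultimately have "length (concat (map \<omega> (map i [0..<n]))) = k n" by simp
  then show ?thesis
    using fac eq by (auto simp: prefix_factorization_def factorization_def)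
qed

lemma factorization_unique:
  assumes "prefix_free_on \<omega> S"
    and fac: "factorization \<omega> S x k i" and fac': "factorization \<omega> S x k' i'"
  shows "k = k' \<and> i = i'"
proof -
  have initial: "map i [0..<n] = map i' [0..<n]" for n
    by (rule prefix_factorization_unique[OF assms(1)
          prefix_factorization_of_factorization[OF fac]
          prefix_factorization_of_factorization[OF fac']]) simp
  have "i n = i' n" for n
    using arg_cong[OF initial[of "Suc n"], of "\<lambda>is. is ! n"] by (simp add: nth_append)
  moreover have "k n = k' n" for n
  proof -
    have "k n = length (word x 0 (k n))" by simp
    also have "\<dots> = length (word x 0 (k' n))"
      by (simp only: factorization_word_0[OF fac] factorization_word_0[OF fac'] initial)
    finally show ?thesis by simp
  qed
  ultimately show ?thesis by auto
qed

lemma factorization_ex1_iff_ex: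
  assumes "prefix_free_on \<omega> S"
  shows "(\<exists>!(k, i). factorization \<omega> S x k i) \<longleftrightarrow> (\<exists>k i. factorization \<omega> S x k i)"
proof
  assume "\<exists>k i. factorization \<omega> S x k i"
  then obtain k i where fac: "factorization \<omega> S x k i" by blast
  show "\<exists>!(k, i). factorization \<omega> S x k i"
  proof (rule ex1I[of _ "(k, i)"])
    fix p assume "case p of (k', i') \<Rightarrow> factorization \<omega> S x k' i'"
    then show "p = (k, i)"
      using factorization_unique[OF assms fac] by (cases p) simp
  qed (simp add: fac)
qed auto

lemma factorization_exists:
  assumes "prefix_free_on \<omega> S"
    and nonempty: "\<forall>a\<in>S. \<omega> a \<noteq> []"
    and prefixes: "\<forall>n. \<exists>is. length is = n \<and> prefix_factorization \<omega> S x is"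
  shows "\<exists>k i. factorization \<omega> S x k i"
proof -
  define P where "P n is \<longleftrightarrow> length is = n \<and> prefix_factorization \<omega> S x is" for n "is"
  have P_unique: "\<exists>!is. P n is" for n
    using prefixes prefix_factorization_unique[OF assms(1)] unfolding P_def by metis
  define f where "f n = (THE is. P n is)" for n
  have P_f: "P n (f n)" for n
    unfolding f_def using P_unique by (rule theI')
  have f_Suc: "f (Suc n) = f n @ [f (Suc n) ! n]" for n
  proof -
    let ?l = "f (Suc n)"
    have "P n (take n ?l)"
      using P_f[of "Suc n"] set_take_subset[of n ?l] prefix_concat_map_take[of \<omega> n ?l]
        word_prefix[of x "concat (map \<omega> ?l)"]
      unfolding P_def prefix_factorization_def by auto
    then have "take n ?l = f n"
      using P_unique P_f by blast
    moreover have "take (Suc n) ?l = ?l" "n < length ?l"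
      using P_f[of "Suc n"] unfolding P_def by simp_all
    ultimately show ?thesis
      by (metis take_Suc_conv_app_nth)
  qed
  define i where "i n = f (Suc n) ! n" for n
  define k where "k n = length (concat (map \<omega> (f n)))" for n
  have i_in_S: "i n \<in> S" for n
    using P_f[of "Suc n"] unfolding P_def prefix_factorization_def i_def by auto
  have k_Suc: "k (Suc n) = k n + length (\<omega> (i n))" for n
    unfolding k_def i_def by (subst f_Suc) simp
  have word_k: "word x 0 (k n) = concat (map \<omega> (f n))" for n
    using P_f unfolding P_def prefix_factorization_def k_def by blast
  have "word x (k n) (k (Suc n)) = \<omega> (i n)" for n
  proof -
    have "word x 0 (k (Suc n)) = word x 0 (k n) @ word x (k n) (k (Suc n))"
      using k_Suc by (intro word_append) simp_all
    moreover have "word x 0 (k (Suc n)) = word x 0 (k n) @ \<omega> (i n)"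
      unfolding word_k by (subst f_Suc) (simp add: i_def)
    ultimately show ?thesis by simp
  qed
  moreover have "k 0 = 0"
    using P_f[of 0] unfolding P_def k_def by simp
  moreover have "strict_mono k"
    unfolding strict_mono_Suc_iff using k_Suc nonempty i_in_S by simp
  ultimately have "factorization \<omega> S x k i"
    unfolding factorization_def using i_in_S by blast
  then show ?thesis by blast
qed

lemma prefix_factorization_exists:
  assumes "finite S" and x: "x \<in> XA N A"
    and extendable: "\<forall>\<gamma>\<in>Bstar N A. \<exists>\<eta> is. set is \<subseteq> S \<and> \<gamma> @ \<eta> = concat (map \<omega> is)"
  shows "\<exists>is. length is = n \<and> prefix_factorization \<omega> S x is"
proof -
  obtain m where "\<forall>l\<in>length ` \<omega> ` S. l \<le> m"
    using \<open>finite S\<close> finite_nat_set_iff_bounded_le by blast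
  then obtain L where "0 < L" and L: "\<forall>a\<in>S. length (\<omega> a) \<le> L"
    by (metis image_eqI le_SucI zero_less_Suc)
  define \<gamma> where "\<gamma> = word x 0 (n * L)"
  obtain \<eta> "is" where "is": "set is \<subseteq> S" "\<gamma> @ \<eta> = concat (map \<omega> is)"
    using extendable word_in_Bstar[OF x] unfolding \<gamma>_def by blast
  have "n * L \<le> length (\<gamma> @ \<eta>)"
    unfolding \<gamma>_def by simp
  also have "\<dots> \<le> length is * L"
    using length_concat_map_le[OF L "is"(1)] "is"(2) by simp
  finally have "n \<le> length is"
    using \<open>0 < L\<close> by simp
  let ?u = "concat (map \<omega> (take n is))"
  have "length ?u \<le> length \<gamma>"
    using length_concat_map_le[OF L, of "take n is"] "is"(1) set_take_subset[of n "is"]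
      \<open>n \<le> length is\<close> unfolding \<gamma>_def by simp
  moreover have "prefix ?u (\<gamma> @ \<eta>)"
    unfolding "is"(2) by (rule prefix_concat_map_take)
  ultimately have "prefix ?u \<gamma>"
    by (meson prefix_length_prefix prefixI)
  then have "word x 0 (length ?u) = ?u"
    by (rule word_prefix[rotated]) (simp add: \<gamma>_def)
  then show ?thesis
    using \<open>n \<le> length is\<close> "is"(1) set_take_subset[of n "is"]
    unfolding prefix_factorization_def by (intro exI[of _ "take n is"]) auto
qed

lemma code_concat_inj:
  assumes "is_code N A (\<omega> ` S)" "inj_on \<omega> S" "set is \<subseteq> S" "set js \<subseteq> S"
    and "concat (map \<omega> is) = concat (map \<omega> js)"
  shows "is = js"
proof -
  have "set (map \<omega> is) \<subseteq> \<omega> ` S" "set (map \<omega> js) \<subseteq> \<omega> ` S"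
    using assms(3,4) by auto
  then have "map \<omega> is = map \<omega> js"
    using assms(1,5) unfolding is_code_def by blast
  moreover have "inj_on \<omega> (set is \<union> set js)"
    using assms(2-4) by (auto intro: inj_on_subset)
  ultimately show ?thesis
    using inj_on_map_eq_map by blast
qed

lemma code_word_nonempty:
  assumes "is_code N A (\<omega> ` S)" "a \<in> S"
  shows "\<omega> a \<noteq> []"
proof
  assume "\<omega> a = []"
  moreover have "set [\<omega> a] \<subseteq> \<omega> ` S"
    using assms(2) by simp
  moreover have "set [] \<subseteq> \<omega> ` S" by simp
  ultimately have "[\<omega> a] = []"
    using assms(1) unfolding is_code_def by (metis concat.simps(1,2) append_Nil2)
  then show False by simp
qed

lemma prefix_code_prefix_free_on:
  assumes "is_prefix_code N A (\<omega> ` S)" "inj_on \<omega> S"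
  shows "prefix_free_on \<omega> S"
  using assms unfolding is_prefix_code_def prefix_free_on_def by (meson image_eqI inj_onD)

lemma extension_from_factorization:
  assumes factorizable: "\<forall>x\<in>XA N A. \<exists>k i. factorization \<omega> S x k i"
    and "\<gamma> \<in> Bstar N A"
  obtains \<eta> "is" where "\<eta> \<in> Bstar N A" "\<gamma> @ \<eta> \<in> Bstar N A"
    "set is \<subseteq> S" "\<gamma> @ \<eta> = concat (map \<omega> is)"
proof (cases "\<gamma> = []")
  case True
  then show thesis
    using that[of "[]" "[]"] by (simp add: Bstar_def)
next
  case False
  obtain x where x: "x \<in> XA N A" "\<gamma> = word x 0 (length \<gamma>)"
    using \<open>\<gamma> \<in> Bstar N A\<close> False by (rule Bstar_nonempty_word)
  obtain k i where fac: "factorization \<omega> S x k i"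
    using factorizable x(1) by blast
  let ?n = "length \<gamma>"
  have "?n \<le> k ?n"
    using fac unfolding factorization_def by (simp add: strict_mono_imp_increasing)
  then have split: "word x 0 (k ?n) = \<gamma> @ word x ?n (k ?n)"
    using word_append[of 0 ?n "k ?n" x] by (simp add: x(2)[symmetric])
  show thesis
  proof (rule that)
    show "word x ?n (k ?n) \<in> Bstar N A" "\<gamma> @ word x ?n (k ?n) \<in> Bstar N A"
      using word_in_Bstar[OF x(1)] split by metis+
    show "set (map i [0..<?n]) \<subseteq> S"
      using fac unfolding factorization_def by auto
    show "\<gamma> @ word x ?n (k ?n) = concat (map \<omega> (map i [0..<?n]))"
      using split factorization_word_0[OF fac] by simp
  qed
qed

lemma unique_extension_from_factorization:
  assumes "is_code N A (\<omega> ` S)" "inj_on \<omega> S"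
    and "\<forall>x\<in>XA N A. \<exists>k i. factorization \<omega> S x k i" and "\<gamma> \<in> Bstar N A"
  shows "\<exists>\<eta>\<in>Bstar N A. \<gamma> @ \<eta> \<in> Bstar N A \<and>
           (\<exists>!is. set is \<subseteq> S \<and> \<gamma> @ \<eta> = concat (map \<omega> is))"
proof -
  obtain \<eta> "is" where \<eta>: "\<eta> \<in> Bstar N A" "\<gamma> @ \<eta> \<in> Bstar N A"
    and "is": "set is \<subseteq> S" "\<gamma> @ \<eta> = concat (map \<omega> is)"
    using extension_from_factorization[OF assms(3,4)] by blast
  moreover have "js = is" if "set js \<subseteq> S" "\<gamma> @ \<eta> = concat (map \<omega> js)" for js
    using code_concat_inj[OF assms(1,2) that(1) "is"(1)] that(2) "is"(2) by simp
  ultimately show ?thesis by blast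
qed

theorem mainTheorem4:
  fixes N M :: nat and A :: "nat \<Rightarrow> nat \<Rightarrow> nat" and \<omega> :: "nat \<Rightarrow> nat list"
  assumes A01: "\<forall>i\<in>{1..N}. \<forall>j\<in>{1..N}. A i j \<in> {0, 1}"
    and inj: "inj_on \<omega> {1..M}"
    and pc: "is_prefix_code N A (\<omega> ` {1..M})"
  shows "(\<forall>\<gamma>\<in>Bstar N A. \<exists>\<eta>\<in>Bstar N A. \<gamma> @ \<eta> \<in> Bstar N A \<and>
            (\<exists>!is. set is \<subseteq> {1..M} \<and> \<gamma> @ \<eta> = concat (map \<omega> is)))
     \<longleftrightarrow>
     (\<forall>x\<in>XA N A. \<exists>!(k, i). k 0 = 0 \<and> strict_mono (k :: nat \<Rightarrow> nat) \<and>
            (\<forall>n. i n \<in> {1..M} \<and> word x (k n) (k (Suc n)) = \<omega> (i n)))"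
    (is "?extendable \<longleftrightarrow> ?factorizable")
proof -
  have code: "is_code N A (\<omega> ` {1..M})"
    using pc by (simp add: is_prefix_code_def)
  have prefix_free: "prefix_free_on \<omega> {1..M}"
    using pc inj by (rule prefix_code_prefix_free_on)
  have nonempty: "\<forall>a\<in>{1..M}. \<omega> a \<noteq> []"
    using code_word_nonempty[OF code] by blast
  have factorizable_iff:
    "?factorizable \<longleftrightarrow> (\<forall>x\<in>XA N A. \<exists>k i. factorization \<omega> {1..M} x k i)"
    using factorization_ex1_iff_ex[OF prefix_free] unfolding factorization_def by simp
  show ?thesis
  proof
    assume ?extendable
    then have extendable:
      "\<forall>\<gamma>\<in>Bstar N A. \<exists>\<eta> is. set is \<subseteq> {1..M} \<and> \<gamma> @ \<eta> = concat (map \<omega> is)"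
      by blast
    have "\<exists>k i. factorization \<omega> {1..M} x k i" if "x \<in> XA N A" for x
      by (intro factorization_exists[OF prefix_free nonempty] allI
          prefix_factorization_exists[OF finite_atLeastAtMost that extendable])
    then show ?factorizable
      unfolding factorizable_iff by blast
  next
    assume ?factorizable
    then have factorizable: "\<forall>x\<in>XA N A. \<exists>k i. factorization \<omega> {1..M} x k i"
      unfolding factorizable_iff .
    show ?extendable
      by (intro ballI) (rule unique_extension_from_factorization[OF code inj factorizable])
  qed
qed

end
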